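(* Let $P$ be a non-symmetric operad of sets and let $\overline{P}$ be its reverse. Let $(S,\mu,\eta)$ and $(\overline{S},\overline{\mu},\overline{\eta})$ be the monads on $\mathbf{Set}$ induced by $P$ and $\overline{P}$ respectively. Then $\overline{P}$ is a non-symmetric operad, and the maps $\iota_X:SX\to\overline{S}X$, $(\theta,x_1,\dots,x_n)\mapsto(\theta,x_n,\dots,x_1)$ (for $n\in\mathbb{N}$, $\theta\in P(n)$, $x_i\in X$), form an isomorphism of monads $\iota:(S,\mu,\eta)\to(\overline{S},\overline{\mu},\overline{\eta})$. In particular the monads induced by $P$ and $\overline{P}$ are isomorphic.
   Context: A non-symmetric operad of sets $P$ consists of sets $P(n)$ ($n\in\mathbb{N}$), an identity $1\in P(1)$, and associative, unital compositions $P(n)\times P(k_1)\times\cdots\times P(k_n)\to P(k_1+\cdots+k_n)$, written $\theta\circ(\theta_1,\dots,\theta_n)$. The reverse $\overline{P}$ of $P$ has $\overline{P}(n)=P(n)$, the same identity, and composition $\theta\circ_{\mathrm{rev}}(\theta_1,\dots,\theta_n)=\theta\circ(\theta_n,\dots,\theta_1)$. The monad $(S,\mu,\eta)$ induced by an operad $P$: $SX=\sum_{n\in\mathbb{N}}P(n)\times X^n$, $\eta_X(x)=(1,x)$, and $\mu_X$ sends $(\theta,(\theta_1,x_1^1,\dots,x_1^{k_1}),\dots,(\theta_n,x_n^1,\dots,x_n^{k_n}))$ to $(\theta\circ(\theta_1,\dots,\theta_n),x_1^1,\dots,x_1^{k_1},\dots,x_n^1,\dots,x_n^{k_n})$. An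 isomorphism of monads $\iota:(S,\mu,\eta)\to(S',\mu',\eta')$ is a natural isomorphism $\iota:S\to S'$ with $\iota_X\eta_X=\eta'_X$ and $\iota_X\circ\mu_X=\mu'_X\circ\iota_{S'X}\circ S\iota_X$ for every set $X$. *)

theory Defs
  imports Main
begin

text \<open>A non-symmetric operad of sets, encoded as follows: operations live in a
carrier set Op of some type 'o, each with an arity ar; P(n) = {t \<in> Op. ar t = n}
(so the P(n) are disjoint, as in the disjoint sum). e is the identity,
cmp t [t1,...,tn] is the composite t \<circ> (t1,...,tn).\<close>

definition P :: "'o set \<Rightarrow> ('o \<Rightarrow> nat) \<Rightarrow> nat \<Rightarrow> 'o set" where
  "P Op ar n = {t \<in> Op. ar t = n}"

definition ns_operad ::
  "'o set \<Rightarrow> ('o \<Rightarrow> nat) \<Rightarrow> 'o \<Rightarrow> ('o \<Rightarrow> 'o list \<Rightarrow> 'o) \<Rightarrow> bool" where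
  "ns_operad Op ar e cmp \<longleftrightarrow>
     e \<in> P Op ar 1 \<and>
     (\<forall>t ts. t \<in> Op \<longrightarrow> length ts = ar t \<longrightarrow> set ts \<subseteq> Op \<longrightarrow>
        cmp t ts \<in> P Op ar (sum_list (map ar ts))) \<and>
     (\<forall>t \<in> Op. cmp e [t] = t) \<and>
     (\<forall>t \<in> Op. cmp t (replicate (ar t) e) = t) \<and>
     (\<forall>t ts tss. t \<in> Op \<longrightarrow> length ts = ar t \<longrightarrow> set ts \<subseteq> Op \<longrightarrow>
        list_all2 (\<lambda>s ss. length ss = ar s) ts tss \<longrightarrow>
        (\<forall>ss \<in> set tss. set ss \<subseteq> Op) \<longrightarrow>
        cmp (cmp t ts) (concat tss) = cmp t (map2 cmp ts tss))"

definition rev_comp :: "('o \<Rightarrow> 'o list \<Rightarrow> 'o) \<Rightarrow> 'o \<Rightarrow> 'o list \<Rightarrow> 'o" where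
  "rev_comp cmp t ts = cmp t (rev ts)"

text \<open>The induced monad: SX = \<Sum>n. P(n) \<times> X^n, represented as pairs (t, xs)
with t \<in> P(length xs) and all xs in X.\<close>
definition S_obj :: "'o set \<Rightarrow> ('o \<Rightarrow> nat) \<Rightarrow> 'x set \<Rightarrow> ('o \<times> 'x list) set" where
  "S_obj Op ar X = {(t, xs). t \<in> P Op ar (length xs) \<and> set xs \<subseteq> X}"

definition S_map :: "('x \<Rightarrow> 'y) \<Rightarrow> 'o \<times> 'x list \<Rightarrow> 'o \<times> 'y list" where
  "S_map f s = (fst s, map f (snd s))"

definition S_eta :: "'o \<Rightarrow> 'x \<Rightarrow> 'o \<times> 'x list" where
  "S_eta e x = (e, [x])"

definition S_mu :: "('o \<Rightarrow> 'o list \<Rightarrow> 'o) \<Rightarrow> 'o \<times> ('o \<times> 'x list) list \<Rightarrow> 'o \<times> 'x list" where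
  "S_mu cmp s = (cmp (fst s) (map fst (snd s)), concat (map snd (snd s)))"

definition iota :: "'o \<times> 'x list \<Rightarrow> 'o \<times> 'x list" where
  "iota s = (fst s, rev (snd s))"

end

theory Submission
  imports Defs
begin

text \<open>Everything reduces to one list identity, rev (concat xss) = concat (rev (map rev xss)):
reversing a concatenation reverses the order of the blocks as well as each block. Applied to the
inputs of a composite it turns the associativity law of P into that of the reverse operad, and
applied to the arguments it makes the involution \<iota> compatible with \<mu>; naturality and
compatibility with \<eta> hold on the nose.\<close>

lemma map2_rev_rev_map_rev:
  assumes "length tss = length ts"
  shows "map2 cmp (rev ts) (rev (map rev tss)) = rev (map2 (rev_comp cmp) ts tss)"
  using assms by (simp add: zip_rev[symmetric] rev_map zip_map2 case_prod_beta rev_comp_def)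

lemma ns_operad_rev_comp:
  assumes "ns_operad Op ar e cmp"
  shows "ns_operad Op ar e (rev_comp cmp)"
proof -
  note operad = assms[unfolded ns_operad_def]
  have assoc: "cmp (cmp t ts) (concat tss) = cmp t (map2 cmp ts tss)"
    if "t \<in> Op" "length ts = ar t" "set ts \<subseteq> Op"
       "list_all2 (\<lambda>s ss. length ss = ar s) ts tss" "\<forall>ss \<in> set tss. set ss \<subseteq> Op"
    for t ts tss
    using operad that by blast
  show ?thesis
    unfolding ns_operad_def
  proof (intro conjI allI impI ballI)
    show "e \<in> P Op ar 1"
      using operad by blast
  next
    fix t ts
    assume "t \<in> Op" "length ts = ar t" "set ts \<subseteq> Op"
    then have "cmp t (rev ts) \<in> P Op ar (sum_list (map ar (rev ts)))"
      using operad by auto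
    then show "rev_comp cmp t ts \<in> P Op ar (sum_list (map ar ts))"
      by (simp add: rev_comp_def rev_map[symmetric] sum_list_rev)
  next
    fix t
    assume "t \<in> Op"
    then show "rev_comp cmp e [t] = t" "rev_comp cmp t (replicate (ar t) e) = t"
      using operad by (auto simp: rev_comp_def)
  next
    fix t ts tss
    assume t: "t \<in> Op" "length ts = ar t" "set ts \<subseteq> Op"
      and tss: "list_all2 (\<lambda>s ss. length ss = ar s) ts tss" "\<forall>ss \<in> set tss. set ss \<subseteq> Op"
    have len: "length tss = length ts"
      using tss(1) by (rule list_all2_lengthD[symmetric])
    have rev_arities: "list_all2 (\<lambda>s ss. length ss = ar s) (rev ts) (rev (map rev tss))"
      using tss(1) by (simp add: list_all2_rev list_all2_map2)
    have "rev_comp cmp (rev_comp cmp t ts) (concat tss)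
        = cmp (cmp t (rev ts)) (concat (rev (map rev tss)))"
      by (simp add: rev_comp_def rev_concat rev_map)
    also have "\<dots> = cmp t (map2 cmp (rev ts) (rev (map rev tss)))"
      using t tss(2) rev_arities by (intro assoc) auto
    also have "\<dots> = rev_comp cmp t (map2 (rev_comp cmp) ts tss)"
      by (simp only: map2_rev_rev_map_rev[OF len] rev_comp_def)
    finally show "rev_comp cmp (rev_comp cmp t ts) (concat tss)
        = rev_comp cmp t (map2 (rev_comp cmp) ts tss)" .
  qed
qed

lemma iota_iota [simp]: "iota (iota s) = s"
  by (simp add: iota_def)

lemma iota_in_S_obj: "s \<in> S_obj Op ar X \<Longrightarrow> iota s \<in> S_obj Op ar X"
  by (auto simp: iota_def S_obj_def)

lemma bij_betw_iota_S_obj: "bij_betw iota (S_obj Op ar X) (S_obj Op ar X)"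
  by (rule bij_betw_byWitness[where f' = iota]) (auto simp: iota_in_S_obj)

lemma iota_S_map: "iota (S_map f s) = S_map f (iota s)"
  by (simp add: iota_def S_map_def rev_map)

lemma iota_S_eta: "iota (S_eta e x) = S_eta e x"
  by (simp add: iota_def S_eta_def)

lemma iota_S_mu: "iota (S_mu cmp s) = S_mu (rev_comp cmp) (iota (S_map iota s))"
  by (simp add: iota_def S_mu_def S_map_def rev_comp_def rev_map rev_concat o_def)

theorem mainTheorem2:
  fixes Op :: "'o set" and ar :: "'o \<Rightarrow> nat" and e :: 'o
    and cmp :: "'o \<Rightarrow> 'o list \<Rightarrow> 'o"
  assumes "ns_operad Op ar e cmp"
  shows "ns_operad Op ar e (rev_comp cmp)
    \<and> (\<forall>X :: 'x set. bij_betw iota (S_obj Op ar X) (S_obj Op ar X))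
    \<and> (\<forall>(X :: 'x set) (Y :: 'y set) (f :: 'x \<Rightarrow> 'y). f ` X \<subseteq> Y \<longrightarrow>
         (\<forall>s \<in> S_obj Op ar X. iota (S_map f s) = S_map f (iota s)))
    \<and> (\<forall>(X :: 'x set). \<forall>x \<in> X. iota (S_eta e x) = S_eta e x)
    \<and> (\<forall>(X :: 'x set). \<forall>s \<in> S_obj Op ar (S_obj Op ar X).
         iota (S_mu cmp s) = S_mu (rev_comp cmp) (iota (S_map iota s)))"
  by (simp add: ns_operad_rev_comp[OF assms] bij_betw_iota_S_obj iota_S_map iota_S_eta iota_S_mu)

end
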